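(* Let $G$ be a finite graph with at least one vertex and $\lambda>0$. Let $\mathbf{I}$ be an independent set drawn from the hard-core model at fugacity $\lambda$ on $G$. (i) For every $v\in V(G)$, writing $\mathbf{F}_v$ for the subgraph of $G$ induced by the neighbours of $v$ that are externally uncovered by $\mathbf{I}$, \[ \Pr(v\in\mathbf{I})\ge \frac{\lambda}{1+\lambda}(1+\lambda)^{-\mathbb{E}|V(\mathbf{F}_v)|}\,. \] (ii) Moreover, \[ \mathbb{E}|\mathbf{I}| \ge \frac{\lambda}{1+\lambda}|V(G)|(1+\lambda)^{-\frac{2|E(G)|}{|V(G)|}}\,. \]
   Context: For a graph $G$ with set $\mathcal{I}(G)$ of independent sets (including the empty set) and $\lambda>0$, the hard-core model on $G$ at fugacity $\lambda$ is the probability distribution on $\mathcal{I}(G)$ with $\Pr(\mathbf{I}=I)=\lambda^{|I|}/Z_G(\lambda)$, where $Z_G(\lambda)=\sum_{I\in\mathcal{I}(G)}\lambda^{|I|}$. Given $I\in\mathcal{I}(G)$ and $v\in V(G)$, a neighbour $u\in N(v)$ is externally uncovered by $I$ if $u\notin N(I\setminus N(v))$, i.e. $u$ has no neighbour in $I\setminus N(v)$. *)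

theory Defs
  imports Complex_Main
begin

definition simple_graph :: "'a set \<Rightarrow> ('a \<Rightarrow> 'a \<Rightarrow> bool) \<Rightarrow> bool" where
  "simple_graph V E \<longleftrightarrow> finite V \<and> (\<forall>u w. E u w \<longrightarrow> u \<in> V \<and> w \<in> V)
     \<and> (\<forall>u w. E u w \<longrightarrow> E w u) \<and> (\<forall>u. \<not> E u u)"

definition nbhd :: "'a set \<Rightarrow> ('a \<Rightarrow> 'a \<Rightarrow> bool) \<Rightarrow> 'a \<Rightarrow> 'a set" where
  "nbhd V E v = {u \<in> V. E v u}"

definition edge_set :: "'a set \<Rightarrow> ('a \<Rightarrow> 'a \<Rightarrow> bool) \<Rightarrow> 'a set set" where
  "edge_set V E = {{u, w} | u w. u \<in> V \<and> w \<in> V \<and> E u w}"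

definition indep_sets :: "'a set \<Rightarrow> ('a \<Rightarrow> 'a \<Rightarrow> bool) \<Rightarrow> 'a set set" where
  "indep_sets V E = {I. I \<subseteq> V \<and> (\<forall>u\<in>I. \<forall>w\<in>I. \<not> E u w)}"

definition Zhc :: "'a set \<Rightarrow> ('a \<Rightarrow> 'a \<Rightarrow> bool) \<Rightarrow> real \<Rightarrow> real" where
  "Zhc V E lam = (\<Sum>I\<in>indep_sets V E. lam ^ card I)"

definition hc_prob :: "'a set \<Rightarrow> ('a \<Rightarrow> 'a \<Rightarrow> bool) \<Rightarrow> real \<Rightarrow> 'a set \<Rightarrow> real" where
  "hc_prob V E lam I = lam ^ card I / Zhc V E lam"

definition hc_expect :: "'a set \<Rightarrow> ('a \<Rightarrow> 'a \<Rightarrow> bool) \<Rightarrow> real \<Rightarrow> ('a set \<Rightarrow> real) \<Rightarrow> real" where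
  "hc_expect V E lam f = (\<Sum>I\<in>indep_sets V E. hc_prob V E lam I * f I)"

text \<open>Neighbours of v externally uncovered by I: u in N(v) with no neighbour in I - N(v).
  This is the vertex set of the induced subgraph F_v.\<close>
definition ext_uncovered :: "'a set \<Rightarrow> ('a \<Rightarrow> 'a \<Rightarrow> bool) \<Rightarrow> 'a set \<Rightarrow> 'a \<Rightarrow> 'a set" where
  "ext_uncovered V E I v =
     {u \<in> nbhd V E v. \<not> (\<exists>w \<in> I - nbhd V E v. E u w)}"

end

(*
  Write F_v(I) for the externally uncovered neighbours of v. Since F_v(I) only depends on
  K = I - N(v), and I \<inter> N(v) is a subset of F_v(K), splitting I into (K, I \<inter> N(v)) and
  summing over all subsets of F_v(K) shows that the total weight of the independent sets
  avoiding N(v) is at least Z * E[(1+\<lambda>)^(-|F_v|)]. Inserting v maps the sets avoiding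
  N(v) \<union> {v} bijectively onto those containing v, so v carries exactly the fraction
  \<lambda>/(1+\<lambda>) of the weight of the sets avoiding N(v).
  Jensen's inequality for the convex function x \<mapsto> (1+\<lambda>)^(-x) gives (i). Summing (i) over v,
  applying Jensen again to the uniform average over V, and using |F_v| \<le> deg v together with
  the handshake bound \<Sum> deg v \<le> 2|E| gives (ii).
*)

theory Submission
  imports Defs "HOL-Analysis.Convex"
begin

lemma sum_Pow_power_card:
  fixes x :: "'b::comm_semiring_1"
  assumes "finite A"
  shows "(\<Sum>S\<in>Pow A. x ^ card S) = (1 + x) ^ card A"
  using prod_add[OF assms, of "\<lambda>_. x" "\<lambda>_. 1"] by (simp add: add.commute)

lemma powr_neg_convex_combination_le:
  fixes p x :: "'b \<Rightarrow> real"
  assumes "finite S" "S \<noteq> {}" "\<And>i. i \<in> S \<Longrightarrow> p i \<ge> 0" "sum p S = 1" "b > 0"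
  shows "b powr (- (\<Sum>i\<in>S. p i * x i)) \<le> (\<Sum>i\<in>S. p i * b powr (- x i))"
proof -
  have "exp (\<Sum>i\<in>S. p i *\<^sub>R (- x i * ln b)) \<le> (\<Sum>i\<in>S. p i * exp (- x i * ln b))"
    by (rule convex_on_sum[OF assms(1,2) exp_convex assms(4,3)]) auto
  then show ?thesis
    using assms(5) by (simp add: powr_def sum_distrib_right mult.assoc sum_negf)
qed

lemma simple_graph_finite: "simple_graph V E \<Longrightarrow> finite V"
  unfolding simple_graph_def by simp

lemma empty_in_indep_sets: "{} \<in> indep_sets V E"
  unfolding indep_sets_def by simp

lemma finite_indep_sets: "finite V \<Longrightarrow> finite (indep_sets V E)"
  unfolding indep_sets_def by (rule finite_subset[of _ "Pow V"]) auto

lemma finite_indep_set: "finite V \<Longrightarrow> I \<in> indep_sets V E \<Longrightarrow> finite I"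
  unfolding indep_sets_def using finite_subset by auto

lemma Zhc_pos:
  assumes "finite V" "lam > 0"
  shows "Zhc V E lam > 0"
proof -
  have "lam ^ card ({} :: 'a set) \<le> Zhc V E lam"
    unfolding Zhc_def using assms
    by (intro member_le_sum empty_in_indep_sets finite_indep_sets) auto
  then show ?thesis by simp
qed

lemma hc_expect_eq:
  "hc_expect V E lam f = (\<Sum>I\<in>indep_sets V E. lam ^ card I * f I) / Zhc V E lam"
  unfolding hc_expect_def hc_prob_def by (simp add: sum_divide_distrib)

lemma hc_expect_indicator:
  assumes "finite V"
  shows "hc_expect V E lam (\<lambda>I. if P I then 1 else 0)
       = (\<Sum>I\<in>{I\<in>indep_sets V E. P I}. lam ^ card I) / Zhc V E lam"
  unfolding hc_expect_eq
  by (simp add: sum.inter_filter[OF finite_indep_sets[OF assms]] if_distrib cong: if_cong)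

lemma hc_prob_nonneg: "lam > 0 \<Longrightarrow> finite V \<Longrightarrow> hc_prob V E lam I \<ge> 0"
  unfolding hc_prob_def using Zhc_pos[of V lam E] by simp

lemma sum_hc_prob: "lam > 0 \<Longrightarrow> finite V \<Longrightarrow> (\<Sum>I\<in>indep_sets V E. hc_prob V E lam I) = 1"
  unfolding hc_prob_def using Zhc_pos[of V lam E]
  by (simp flip: sum_divide_distrib Zhc_def)

lemma hc_expect_const: "lam > 0 \<Longrightarrow> finite V \<Longrightarrow> hc_expect V E lam (\<lambda>_. c) = c"
  unfolding hc_expect_def by (simp add: sum_hc_prob flip: sum_distrib_right)

lemma hc_expect_mono:
  assumes "lam > 0" "finite V" "\<And>I. I \<in> indep_sets V E \<Longrightarrow> f I \<le> g I"
  shows "hc_expect V E lam f \<le> hc_expect V E lam g"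
  unfolding hc_expect_def using assms
  by (intro sum_mono mult_left_mono hc_prob_nonneg) auto

lemma hc_expect_sum:
  "hc_expect V E lam (\<lambda>I. \<Sum>v\<in>A. f v I) = (\<Sum>v\<in>A. hc_expect V E lam (f v))"
  unfolding hc_expect_def by (simp add: sum_distrib_left sum.swap[of _ A])

lemma hc_expect_powr_neg_ge:
  assumes "lam > 0" "finite V" "b > 0"
  shows "b powr (- hc_expect V E lam f) \<le> hc_expect V E lam (\<lambda>I. b powr (- f I))"
  unfolding hc_expect_def using assms
  by (intro powr_neg_convex_combination_le finite_indep_sets hc_prob_nonneg sum_hc_prob)
     (use empty_in_indep_sets in auto)

lemma insert_in_indep_sets_iff:
  assumes "simple_graph V E" "v \<in> V" "v \<notin> I"
  shows "insert v I \<in> indep_sets V E \<longleftrightarrow> I \<in> indep_sets V E \<and> I \<inter> nbhd V E v = {}"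
  using assms unfolding simple_graph_def indep_sets_def nbhd_def by blast

lemma sum_indep_sets_containing:
  fixes lam :: real
  assumes G: "simple_graph V E" and v: "v \<in> V"
  shows "(\<Sum>I\<in>{I\<in>indep_sets V E. v \<in> I}. lam ^ card I)
       = lam * (\<Sum>I\<in>{I\<in>indep_sets V E. v \<notin> I \<and> I \<inter> nbhd V E v = {}}. lam ^ card I)"
    (is "sum _ ?C = lam * sum _ ?B")
proof -
  have "bij_betw (insert v) ?B ?C"
  proof (rule bij_betw_byWitness[where f' = "\<lambda>J. J - {v}"])
    show "insert v ` ?B \<subseteq> ?C"
      using insert_in_indep_sets_iff[OF G v] by auto
    have "J - {v} \<in> ?B" if "J \<in> ?C" for J
      using that insert_in_indep_sets_iff[OF G v, of "J - {v}"] by (simp add: insert_absorb)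
    then show "(\<lambda>J. J - {v}) ` ?C \<subseteq> ?B" by blast
  qed auto
  then have "sum (\<lambda>I. lam ^ card I) ?C = (\<Sum>I\<in>?B. lam ^ card (insert v I))"
    by (simp add: sum.reindex_bij_betw[symmetric])
  also have "\<dots> = (\<Sum>I\<in>?B. lam * lam ^ card I)"
    using finite_indep_set[OF simple_graph_finite[OF G]] by (intro sum.cong) auto
  finally show ?thesis by (simp add: sum_distrib_left)
qed

lemma sum_indep_sets_disjoint_nbhd:
  fixes lam :: real
  assumes G: "simple_graph V E" and v: "v \<in> V"
  shows "lam * (\<Sum>I\<in>{I\<in>indep_sets V E. I \<inter> nbhd V E v = {}}. lam ^ card I)
       = (1 + lam) * (\<Sum>I\<in>{I\<in>indep_sets V E. v \<in> I}. lam ^ card I)"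
proof -
  have "finite V" using simple_graph_finite[OF G] .
  have split: "{I\<in>indep_sets V E. I \<inter> nbhd V E v = {}}
      = {I\<in>indep_sets V E. v \<in> I} \<union> {I\<in>indep_sets V E. v \<notin> I \<and> I \<inter> nbhd V E v = {}}"
    using G unfolding simple_graph_def indep_sets_def nbhd_def by blast
  have "(\<Sum>I\<in>{I\<in>indep_sets V E. I \<inter> nbhd V E v = {}}. lam ^ card I)
      = (\<Sum>I\<in>{I\<in>indep_sets V E. v \<in> I}. lam ^ card I)
      + (\<Sum>I\<in>{I\<in>indep_sets V E. v \<notin> I \<and> I \<inter> nbhd V E v = {}}. lam ^ card I)"
    unfolding split by (rule sum.union_disjoint) (use finite_indep_sets[OF \<open>finite V\<close>] in auto)
  then show ?thesis
    unfolding sum_indep_sets_containing[OF G v] by (simp add: algebra_simps)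
qed

lemma ext_uncovered_diff_nbhd: "ext_uncovered V E (I - nbhd V E v) v = ext_uncovered V E I v"
  unfolding ext_uncovered_def by auto

lemma sum_indep_sets_ext_uncovered_le:
  fixes lam :: real
  assumes "finite V" "lam > 0"
  shows "(\<Sum>I\<in>indep_sets V E. lam ^ card I * (1 + lam) powr - real (card (ext_uncovered V E I v)))
       \<le> (\<Sum>I\<in>{I\<in>indep_sets V E. I \<inter> nbhd V E v = {}}. lam ^ card I)"
proof -
  define N where "N = nbhd V E v"
  define X where "X = (\<lambda>K. ext_uncovered V E K v)"
  define A where "A = {I\<in>indep_sets V E. I \<inter> N = {}}"
  define g where "g = (\<lambda>(K, S :: 'a set). lam ^ card K * (1 + lam) powr - real (card (X K)) * lam ^ card S)"
  have fin_A: "finite A" unfolding A_def using finite_indep_sets[OF assms(1)] by simp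
  have fin_X: "finite (X K)" for K
    unfolding X_def ext_uncovered_def nbhd_def using assms(1) by simp
  let ?split = "\<lambda>I. (I - N, I \<inter> N)"
  have "inj_on ?split (indep_sets V E)"
    by (rule inj_onI) (simp, blast)
  moreover have split_into: "?split ` indep_sets V E \<subseteq> Sigma A (\<lambda>K. Pow (X K))"
    unfolding A_def X_def N_def indep_sets_def ext_uncovered_def by auto
  moreover have "lam ^ card I * (1 + lam) powr - real (card (X I)) = g (?split I)"
    if "I \<in> indep_sets V E" for I
  proof -
    have "card I = card (I - N) + card (I \<inter> N)"
      using finite_indep_set[OF assms(1) that] by (metis add.commute card_Int_Diff)
    then show ?thesis
      unfolding g_def X_def N_def by (simp add: ext_uncovered_diff_nbhd power_add)
  qed
  ultimately have "(\<Sum>I\<in>indep_sets V E. lam ^ card I * (1 + lam) powr - real (card (X I)))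
      = (\<Sum>p\<in>?split ` indep_sets V E. g p)"
    by (simp add: sum.reindex)
  also have "\<dots> \<le> (\<Sum>p\<in>Sigma A (\<lambda>K. Pow (X K)). g p)"
    using split_into fin_A fin_X assms(2) by (intro sum_mono2) (auto simp: g_def)
  also have "\<dots> = (\<Sum>K\<in>A. lam ^ card K * (1 + lam) powr - real (card (X K)) * (\<Sum>S\<in>Pow (X K). lam ^ card S))"
    using fin_A fin_X by (simp add: sum.Sigma[symmetric] g_def sum_distrib_left)
  also have "\<dots> = (\<Sum>K\<in>A. lam ^ card K)"
    using assms(2) by (simp add: sum_Pow_power_card[OF fin_X] powr_minus_divide powr_realpow)
  finally show ?thesis unfolding A_def X_def N_def .
qed

lemma hc_prob_mem_ge:
  fixes lam :: real
  assumes G: "simple_graph V E" and lam: "lam > 0" and v: "v \<in> V"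
  shows "hc_expect V E lam (\<lambda>I. if v \<in> I then 1 else 0)
       \<ge> lam / (1 + lam) * (1 + lam) powr (- hc_expect V E lam (\<lambda>I. real (card (ext_uncovered V E I v))))"
proof -
  have fin: "finite V" using simple_graph_finite[OF G] .
  have Z: "Zhc V E lam > 0" using Zhc_pos[OF fin lam] .
  let ?W = "\<Sum>I\<in>{I\<in>indep_sets V E. I \<inter> nbhd V E v = {}}. lam ^ card I"
  have "(1 + lam) powr (- hc_expect V E lam (\<lambda>I. real (card (ext_uncovered V E I v))))
      \<le> hc_expect V E lam (\<lambda>I. (1 + lam) powr - real (card (ext_uncovered V E I v)))"
    using lam fin by (intro hc_expect_powr_neg_ge) auto
  also have "\<dots> \<le> ?W / Zhc V E lam"
    unfolding hc_expect_eq using sum_indep_sets_ext_uncovered_le[OF fin lam] Z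
    by (simp add: divide_right_mono)
  finally have "lam / (1 + lam) * (1 + lam) powr (- hc_expect V E lam (\<lambda>I. real (card (ext_uncovered V E I v))))
      \<le> lam / (1 + lam) * (?W / Zhc V E lam)"
    using lam by (intro mult_left_mono) auto
  also have "\<dots> = lam * ?W / ((1 + lam) * Zhc V E lam)"
    by simp
  also have "\<dots> = hc_expect V E lam (\<lambda>I. if v \<in> I then 1 else 0)"
    unfolding hc_expect_indicator[OF fin] sum_indep_sets_disjoint_nbhd[OF G v] using lam by simp
  finally show ?thesis .
qed

lemma hc_expect_card_ext_uncovered_le:
  assumes "finite V" "lam > 0"
  shows "hc_expect V E lam (\<lambda>I. real (card (ext_uncovered V E I v))) \<le> real (card (nbhd V E v))"
proof -
  have "card (ext_uncovered V E I v) \<le> card (nbhd V E v)" for I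
    using assms(1) unfolding ext_uncovered_def nbhd_def by (intro card_mono) auto
  then have "hc_expect V E lam (\<lambda>I. real (card (ext_uncovered V E I v)))
      \<le> hc_expect V E lam (\<lambda>_. real (card (nbhd V E v)))"
    by (intro hc_expect_mono[OF assms(2,1)]) simp
  then show ?thesis by (simp add: hc_expect_const[OF assms(2,1)])
qed

lemma sum_card_nbhd_le_card_edge_set:
  assumes "finite V"
  shows "(\<Sum>v\<in>V. card (nbhd V E v)) \<le> 2 * card (edge_set V E)"
proof -
  let ?ends = "\<lambda>e. {(u, w). e = {u, w}}"
  have fin_E: "finite (edge_set V E)"
    by (rule finite_subset[of _ "Pow V"]) (use assms in \<open>auto simp: edge_set_def\<close>)
  have fin_ends: "finite (?ends e)" if "e \<in> edge_set V E" for e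
  proof (rule finite_subset)
    show "?ends e \<subseteq> e \<times> e" by auto
    show "finite (e \<times> e)" using that unfolding edge_set_def by auto
  qed
  have "Sigma V (nbhd V E) \<subseteq> (\<Union>e\<in>edge_set V E. ?ends e)"
  proof clarify
    fix u w assume "u \<in> V" "w \<in> nbhd V E u"
    then have "{u, w} \<in> edge_set V E" unfolding nbhd_def edge_set_def by auto
    then show "(u, w) \<in> (\<Union>e\<in>edge_set V E. ?ends e)" by blast
  qed
  then have "card (Sigma V (nbhd V E)) \<le> card (\<Union>e\<in>edge_set V E. ?ends e)"
    using fin_E fin_ends by (intro card_mono) auto
  moreover have "(\<Sum>v\<in>V. card (nbhd V E v)) = card (Sigma V (nbhd V E))"
    using assms by (intro card_SigmaI[symmetric]) (auto simp: nbhd_def)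
  moreover have "card (\<Union>e\<in>edge_set V E. ?ends e) \<le> (\<Sum>e\<in>edge_set V E. card (?ends e))"
    by (rule card_UN_le[OF fin_E])
  moreover have "card (?ends e) \<le> 2" if edge: "e \<in> edge_set V E" for e
  proof -
    obtain a b where e: "e = {a, b}" using edge unfolding edge_set_def by auto
    have "?ends e \<subseteq> {(a, b), (b, a)}" unfolding e by (auto simp: doubleton_eq_iff)
    then have "card (?ends e) \<le> card {(a, b), (b, a)}" by (rule card_mono[rotated]) simp
    also have "\<dots> \<le> 2" by (rule card_insert_le_m1) auto
    finally show ?thesis .
  qed
  then have "(\<Sum>e\<in>edge_set V E. card (?ends e)) \<le> 2 * card (edge_set V E)"
    using sum_mono[of "edge_set V E" "\<lambda>e. card (?ends e)" "\<lambda>_. 2"] by simp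
  ultimately show ?thesis by linarith
qed

lemma hc_expect_card_eq_sum:
  assumes "finite V"
  shows "hc_expect V E lam (\<lambda>I. real (card I)) = (\<Sum>v\<in>V. hc_expect V E lam (\<lambda>I. if v \<in> I then 1 else 0))"
proof -
  have "real (card I) = (\<Sum>v\<in>V. if v \<in> I then 1 else 0)" if "I \<in> indep_sets V E" for I
    using that assms unfolding indep_sets_def by (simp add: sum.If_cases Int_absorb1)
  then have "hc_expect V E lam (\<lambda>I. real (card I))
      = hc_expect V E lam (\<lambda>I. \<Sum>v\<in>V. if v \<in> I then 1 else 0)"
    unfolding hc_expect_def by (intro sum.cong) auto
  then show ?thesis by (simp add: hc_expect_sum)
qed

lemma hc_expect_card_ge:
  fixes lam :: real
  assumes G: "simple_graph V E" and "V \<noteq> {}" and lam: "lam > 0"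
  shows "hc_expect V E lam (\<lambda>I. real (card I))
       \<ge> lam / (1 + lam) * real (card V) * (1 + lam) powr (- (2 * real (card (edge_set V E)) / real (card V)))"
proof -
  have fin: "finite V" using simple_graph_finite[OF G] .
  define n where "n = real (card V)"
  define Y where "Y = (\<lambda>v. hc_expect V E lam (\<lambda>I. real (card (ext_uncovered V E I v))))"
  have n: "n > 0" unfolding n_def using fin \<open>V \<noteq> {}\<close> by (simp add: card_gt_0_iff)
  have "(\<Sum>v\<in>V. 1 / n * Y v) \<le> (\<Sum>v\<in>V. real (card (nbhd V E v))) / n"
    unfolding Y_def sum_divide_distrib using hc_expect_card_ext_uncovered_le[OF fin lam] n
    by (intro sum_mono) (simp add: divide_right_mono)
  also have "\<dots> \<le> 2 * real (card (edge_set V E)) / n"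
    using sum_card_nbhd_le_card_edge_set[OF fin, of E] n
    by (intro divide_right_mono) (simp_all flip: of_nat_sum)
  finally have "(1 + lam) powr (- (2 * real (card (edge_set V E)) / n))
      \<le> (1 + lam) powr (- (\<Sum>v\<in>V. 1 / n * Y v))"
    using lam by (intro powr_mono) auto
  also have "\<dots> \<le> (\<Sum>v\<in>V. 1 / n * (1 + lam) powr (- Y v))"
    using fin \<open>V \<noteq> {}\<close> n lam unfolding n_def
    by (intro powr_neg_convex_combination_le) auto
  finally have "lam / (1 + lam) * n * (1 + lam) powr (- (2 * real (card (edge_set V E)) / n))
      \<le> lam / (1 + lam) * n * (\<Sum>v\<in>V. 1 / n * (1 + lam) powr (- Y v))"
    using lam n by (intro mult_left_mono) auto
  also have "\<dots> = (\<Sum>v\<in>V. lam / (1 + lam) * (1 + lam) powr (- Y v))"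
    using n by (simp add: sum_distrib_left)
  also have "\<dots> \<le> (\<Sum>v\<in>V. hc_expect V E lam (\<lambda>I. if v \<in> I then 1 else 0))"
    unfolding Y_def using hc_prob_mem_ge[OF G lam] by (intro sum_mono) auto
  also have "\<dots> = hc_expect V E lam (\<lambda>I. real (card I))"
    by (rule hc_expect_card_eq_sum[OF fin, symmetric])
  finally show ?thesis unfolding n_def .
qed

theorem lemma3p1:
  fixes V :: "'a set" and E :: "'a \<Rightarrow> 'a \<Rightarrow> bool" and lam :: real
  assumes "simple_graph V E" and "V \<noteq> {}" and "lam > 0"
  shows "(\<forall>v\<in>V. hc_expect V E lam (\<lambda>I. if v \<in> I then 1 else 0)
            \<ge> lam / (1 + lam) *
              (1 + lam) powr (- hc_expect V E lam (\<lambda>I. real (card (ext_uncovered V E I v)))))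
     \<and> hc_expect V E lam (\<lambda>I. real (card I))
            \<ge> lam / (1 + lam) * real (card V) *
              (1 + lam) powr (- (2 * real (card (edge_set V E)) / real (card V)))"
  using hc_prob_mem_ge[OF assms(1,3)] hc_expect_card_ge[OF assms] by blast

end
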